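(* Let $G$ be a finite abelian group, $M$ a $\hat G$-linear, left inductive monoid, and $e$ a non-zero idempotent of $M$ with $\mathcal J$-class $J=\mathcal J_e$. Then there exists a positive integer $d$ such that $P(e)e\cong\hat G_J^{\oplus d}$ as right $\hat G$-linear $\hat G_J$-representations.
   Context: $\hat G=G\sqcup\{0\}$ with $0$ absorbing. $\mathrm{Vect}_{\hat G}$: objects are finite pointed sets with an action of $\hat G$ ($0v=0$, $g0=0$) such that $G$ acts freely on nonzero elements; morphisms $f$ satisfy $f(0)=0$, $f(gv)=gf(v)$, $f(v_1)=f(v_2)\neq0\Rightarrow Gv_1=Gv_2$; $\oplus$ is disjoint union with zeros identified. A $\hat G$-linear monoid is a finite monoid $M$ with absorbing element $0_M$ containing $G$ as a subgroup of units commuting with all of $M$, with $G$ acting freely by translation on $M\setminus\{0_M\}$. For $a\in M$, $J(a)=MaM$, $\mathcal J_a$ its $\mathcal J$-class ($a\sim b\iff J(a)=J(b)$), $I(a)=\{x\in J(a):MxM\neq J(a)\}$, $P(a)=(J(a)\setminus I(a))\cup\{0\}$ with product $xy$ if $xy\in J(a)\setminus I(a)$, else $0$. $M$ is left inductive if for every idempotent $e$, left translation by each $m\in M$ on $P(e)$ ($m\cdot x=mx$ if in $J(e)\setminus I(e)$, else $0$) makes $P(e)$ an $M$-representation by morphisms of $\mathrm{Vect}_{\hat G}$ with $0_M$ acting as zero and $g\in G$ as the scalar $g$. $G_J=eMe\cap J$ is a group with identity $e$, $\hat G_J=G_J\sqcup\{0\}$. $P(e)e=\{xe: x\in P(e)\}$,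 on which $\hat G_J$ acts on the right by multiplication in $P(e)$ and $G$ acts by scalars; $\hat G_J$ itself is a right $\hat G_J$-representation by right translation, and $\hat G_J^{\oplus d}$ is the direct sum of $d$ copies. *)

theory Defs
  imports Main
begin

definition hat_linear_monoid ::
  "'m set \<Rightarrow> ('m \<Rightarrow> 'm \<Rightarrow> 'm) \<Rightarrow> 'm \<Rightarrow> 'm \<Rightarrow> 'm set \<Rightarrow> bool" where
  "hat_linear_monoid M mult one zero G \<longleftrightarrow>
     finite M \<and> one \<in> M \<and> zero \<in> M \<and>
     (\<forall>x\<in>M. \<forall>y\<in>M. mult x y \<in> M) \<and>
     (\<forall>x\<in>M. \<forall>y\<in>M. \<forall>z\<in>M. mult (mult x y) z = mult x (mult y z)) \<and>
     (\<forall>x\<in>M. mult one x = x \<and> mult x one = x) \<and>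
     (\<forall>x\<in>M. mult zero x = zero \<and> mult x zero = zero) \<and>
     G \<subseteq> M \<and> one \<in> G \<and>
     (\<forall>g\<in>G. \<forall>h\<in>G. mult g h \<in> G) \<and>
     (\<forall>g\<in>G. \<exists>h\<in>G. mult g h = one \<and> mult h g = one) \<and>
     (\<forall>g\<in>G. \<forall>x\<in>M. mult g x = mult x g) \<and>
     (\<forall>g\<in>G. \<forall>x\<in>M - {zero}. mult g x = x \<longrightarrow> g = one)"

(* Objects of Vect_{\hat G}: finite pointed sets with G-action fixing the point,
   free on non-zero elements. *)
definition vect_obj ::
  "'g set \<Rightarrow> ('g \<Rightarrow> 'g \<Rightarrow> 'g) \<Rightarrow> 'g \<Rightarrow> 'v set \<Rightarrow> 'v \<Rightarrow> ('g \<Rightarrow> 'v \<Rightarrow> 'v) \<Rightarrow> bool" where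
  "vect_obj G gmult gone V z act \<longleftrightarrow>
     finite V \<and> z \<in> V \<and>
     (\<forall>g\<in>G. \<forall>v\<in>V. act g v \<in> V) \<and>
     (\<forall>g\<in>G. act g z = z) \<and>
     (\<forall>v\<in>V. act gone v = v) \<and>
     (\<forall>g\<in>G. \<forall>h\<in>G. \<forall>v\<in>V. act (gmult g h) v = act g (act h v)) \<and>
     (\<forall>g\<in>G. \<forall>v\<in>V - {z}. act g v = v \<longrightarrow> g = gone)"

definition vect_morphism ::
  "'g set \<Rightarrow> 'v set \<Rightarrow> 'v \<Rightarrow> ('g \<Rightarrow> 'v \<Rightarrow> 'v) \<Rightarrow>
   'w set \<Rightarrow> 'w \<Rightarrow> ('g \<Rightarrow> 'w \<Rightarrow> 'w) \<Rightarrow> ('v \<Rightarrow> 'w) \<Rightarrow> bool" where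
  "vect_morphism G V z1 act1 W z2 act2 f \<longleftrightarrow>
     (\<forall>v\<in>V. f v \<in> W) \<and> f z1 = z2 \<and>
     (\<forall>g\<in>G. \<forall>v\<in>V. f (act1 g v) = act2 g (f v)) \<and>
     (\<forall>v1\<in>V. \<forall>v2\<in>V. f v1 = f v2 \<and> f v1 \<noteq> z2 \<longrightarrow>
         (\<lambda>g. act1 g v1) ` G = (\<lambda>g. act1 g v2) ` G)"

definition Jideal :: "'m set \<Rightarrow> ('m \<Rightarrow> 'm \<Rightarrow> 'm) \<Rightarrow> 'm \<Rightarrow> 'm set" where
  "Jideal M mult a = {mult (mult x a) y | x y. x \<in> M \<and> y \<in> M}"

definition Jclass :: "'m set \<Rightarrow> ('m \<Rightarrow> 'm \<Rightarrow> 'm) \<Rightarrow> 'm \<Rightarrow> 'm set" where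
  "Jclass M mult a = {b \<in> M. Jideal M mult b = Jideal M mult a}"

definition Iset :: "'m set \<Rightarrow> ('m \<Rightarrow> 'm \<Rightarrow> 'm) \<Rightarrow> 'm \<Rightarrow> 'm set" where
  "Iset M mult a = {x \<in> Jideal M mult a. Jideal M mult x \<noteq> Jideal M mult a}"

definition Pset :: "'m set \<Rightarrow> ('m \<Rightarrow> 'm \<Rightarrow> 'm) \<Rightarrow> 'm \<Rightarrow> 'm \<Rightarrow> 'm set" where
  "Pset M mult zero a = (Jideal M mult a - Iset M mult a) \<union> {zero}"

(* product in P(a) (also used for left translation by elements of M) *)
definition Pmult :: "'m set \<Rightarrow> ('m \<Rightarrow> 'm \<Rightarrow> 'm) \<Rightarrow> 'm \<Rightarrow> 'm \<Rightarrow> 'm \<Rightarrow> 'm \<Rightarrow> 'm" where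
  "Pmult M mult zero a x y =
     (if mult x y \<in> Jideal M mult a - Iset M mult a then mult x y else zero)"

definition left_inductive ::
  "'m set \<Rightarrow> ('m \<Rightarrow> 'm \<Rightarrow> 'm) \<Rightarrow> 'm \<Rightarrow> 'm \<Rightarrow> 'm set \<Rightarrow> bool" where
  "left_inductive M mult one zero G \<longleftrightarrow>
     (\<forall>e\<in>M. mult e e = e \<longrightarrow>
        (let P = Pset M mult zero e; act = Pmult M mult zero e in
          vect_obj G mult one P zero act \<and>
          (\<forall>m\<in>M. vect_morphism G P zero act P zero act (act m)) \<and>
          (\<forall>m\<in>M. \<forall>n\<in>M. \<forall>x\<in>P. act (mult m n) x = act m (act n x)) \<and>
          (\<forall>x\<in>P. act one x = x) \<and>
          (\<forall>x\<in>P. act zero x = zero) \<and>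
          (\<forall>g\<in>G. \<forall>x\<in>P. act g x = mult g x)))"

definition GJ :: "'m set \<Rightarrow> ('m \<Rightarrow> 'm \<Rightarrow> 'm) \<Rightarrow> 'm \<Rightarrow> 'm set" where
  "GJ M mult e = {mult (mult e m) e | m. m \<in> M} \<inter> Jclass M mult e"

definition hatGJ :: "'m set \<Rightarrow> ('m \<Rightarrow> 'm \<Rightarrow> 'm) \<Rightarrow> 'm \<Rightarrow> 'm \<Rightarrow> 'm set" where
  "hatGJ M mult zero e = GJ M mult e \<union> {zero}"

definition PeE :: "'m set \<Rightarrow> ('m \<Rightarrow> 'm \<Rightarrow> 'm) \<Rightarrow> 'm \<Rightarrow> 'm \<Rightarrow> 'm set" where
  "PeE M mult zero e = (\<lambda>x. Pmult M mult zero e x e) ` Pset M mult zero e"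

(* hatG_J^d: None is the zero, Some (h, i) is h in the i-th copy (i < d) *)
definition Dsum :: "'m set \<Rightarrow> ('m \<Rightarrow> 'm \<Rightarrow> 'm) \<Rightarrow> 'm \<Rightarrow> nat \<Rightarrow> ('m \<times> nat) option set" where
  "Dsum M mult e d = {None} \<union> Some ` (GJ M mult e \<times> {..<d})"

definition Dsum_ract ::
  "'m set \<Rightarrow> ('m \<Rightarrow> 'm \<Rightarrow> 'm) \<Rightarrow> 'm \<Rightarrow> 'm \<Rightarrow> ('m \<times> nat) option \<Rightarrow> 'm \<Rightarrow> ('m \<times> nat) option" where
  "Dsum_ract M mult zero e v h =
     (case v of None \<Rightarrow> None
      | Some (y, i) \<Rightarrow> (let p = Pmult M mult zero e y h in
                         if p = zero then None else Some (p, i)))"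

definition Dsum_act ::
  "('m \<Rightarrow> 'm \<Rightarrow> 'm) \<Rightarrow> 'm \<Rightarrow> ('m \<times> nat) option \<Rightarrow> ('m \<times> nat) option" where
  "Dsum_act mult g v = (case v of None \<Rightarrow> None | Some (y, i) \<Rightarrow> Some (mult g y, i))"

end

(* The nonzero elements of P(e)e are the x in the J-class of e with xe = x.  By stability
   of finite monoids each of them has a left multiple ux = e, so the group
   G_J = eMe \<inter> J acts freely on them by right multiplication.  Choosing a representative
   in each of the d orbits identifies P(e)e with d copies of G_J plus zero, compatibly with
   right multiplication by G_J and, as G is central, with the scalars. *)

theory Submission
  imports Defs
begin

lemma inv_into_commute:
  assumes f: "bij_betw f A B"
    and closed: "\<And>x. x \<in> A \<Longrightarrow> a x \<in> A"
    and commute: "\<And>x. x \<in> A \<Longrightarrow> f (a x) = b (f x)"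
    and y: "y \<in> B"
  shows "inv_into A f (b y) = a (inv_into A f y)"
proof -
  have x: "inv_into A f y \<in> A" using bij_betw_apply[OF bij_betw_inv_into[OF f] y] .
  have "b y = f (a (inv_into A f y))"
    using commute[OF x] bij_betw_inv_into_right[OF f y] by simp
  then show ?thesis using bij_betw_inv_into_left[OF f closed[OF x]] by simp
qed

lemma vect_morphism_bij_betw:
  assumes f: "bij_betw f V W" and "f z1 = z2"
    and "\<And>g v. g \<in> G \<Longrightarrow> v \<in> V \<Longrightarrow> f (act1 g v) = act2 g (f v)"
  shows "vect_morphism G V z1 act1 W z2 act2 f"
  using assms bij_betw_apply[OF f] bij_betw_imp_inj_on[OF f]
  unfolding vect_morphism_def by (metis inj_onD)

lemma vect_morphism_inv_into:
  assumes f: "bij_betw f W V" and zW: "zW \<in> W" "f zW = zV"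
    and closed: "\<And>g w. g \<in> G \<Longrightarrow> w \<in> W \<Longrightarrow> actW g w \<in> W"
    and commute: "\<And>g w. g \<in> G \<Longrightarrow> w \<in> W \<Longrightarrow> f (actW g w) = actV g (f w)"
  shows "vect_morphism G V zV actV W zW actW (inv_into W f)"
    and "vect_morphism G W zW actW V zV actV (inv_into V (inv_into W f))"
proof -
  have inv: "bij_betw (inv_into W f) V W" using f by (rule bij_betw_inv_into)
  show "vect_morphism G V zV actV W zW actW (inv_into W f)"
  proof (rule vect_morphism_bij_betw[OF inv])
    show "inv_into W f zV = zW" using bij_betw_inv_into_left[OF f zW(1)] zW(2) by simp
    show "inv_into W f (actV g v) = actW g (inv_into W f v)" if "g \<in> G" "v \<in> V" for g v
      by (rule inv_into_commute[OF f, where a = "actW g"]) (use that closed commute in auto)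
  qed
  show "vect_morphism G W zW actW V zV actV (inv_into V (inv_into W f))"
    using bij_betw_inv_into[OF inv]
    by (rule vect_morphism_bij_betw) (simp_all add: inv_into_inv_into_eq[OF f] zW closed commute)
qed

locale free_right_action =
  fixes X :: "'a set" and H :: "'h set" and act :: "'a \<Rightarrow> 'h \<Rightarrow> 'a"
    and hmult :: "'h \<Rightarrow> 'h \<Rightarrow> 'h" and u :: 'h
  assumes finite_X: "finite X"
    and unit_in_H: "u \<in> H"
    and hmult_closed: "h \<in> H \<Longrightarrow> h' \<in> H \<Longrightarrow> hmult h h' \<in> H"
    and act_closed: "x \<in> X \<Longrightarrow> h \<in> H \<Longrightarrow> act x h \<in> X"
    and act_unit: "x \<in> X \<Longrightarrow> act x u = x"
    and act_act: "x \<in> X \<Longrightarrow> h \<in> H \<Longrightarrow> h' \<in> H \<Longrightarrow> act (act x h) h' = act x (hmult h h')"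
    and act_free: "x \<in> X \<Longrightarrow> h \<in> H \<Longrightarrow> h' \<in> H \<Longrightarrow> act x h = act x h' \<Longrightarrow> h = h'"
begin

definition orbit :: "'a \<Rightarrow> 'a set" where
  "orbit x = act x ` H"

lemma orbit_subset: "x \<in> X \<Longrightarrow> orbit x \<subseteq> X"
  unfolding orbit_def using act_closed by blast

lemma mem_orbit_self: "x \<in> X \<Longrightarrow> x \<in> orbit x"
  unfolding orbit_def using act_unit unit_in_H by (metis image_eqI)

lemma card_orbit: "x \<in> X \<Longrightarrow> card (orbit x) = card H"
  unfolding orbit_def by (rule card_image) (meson act_free inj_onI)

text \<open>No inverses in \<open>H\<close> are assumed: the orbit of \<open>act x h\<close> lies inside that of \<open>x\<close>,
  and freeness makes both of cardinality \<open>card H\<close>.\<close>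
lemma orbit_act:
  assumes x: "x \<in> X" and h: "h \<in> H"
  shows "orbit (act x h) = orbit x"
proof (rule card_subset_eq)
  show "finite (orbit x)" using orbit_subset[OF x] finite_X finite_subset by blast
  show "orbit (act x h) \<subseteq> orbit x"
    unfolding orbit_def using x h act_act hmult_closed by auto
  show "card (orbit (act x h)) = card (orbit x)"
    using card_orbit x h act_closed by simp
qed

lemma free_basis:
  assumes "X \<noteq> {}"
  obtains d :: nat and rep where "d > 0" "\<And>i. i < d \<Longrightarrow> rep i \<in> X"
    "bij_betw (\<lambda>(h, i). act (rep i) h) (H \<times> {..<d}) X"
proof -
  define d where "d = card (orbit ` X)"
  obtain f where f: "bij_betw f {..<d} (orbit ` X)"
    using ex_bij_betw_nat_finite[of "orbit ` X"] finite_X by (auto simp: d_def lessThan_atLeast0)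
  define rep where "rep i = (SOME r. r \<in> X \<and> orbit r = f i)" for i
  have rep: "rep i \<in> X \<and> orbit (rep i) = f i" if "i < d" for i
  proof -
    have "f i \<in> orbit ` X" using bij_betw_apply[OF f] that by simp
    then have "\<exists>r. r \<in> X \<and> orbit r = f i" by (metis imageE)
    then show ?thesis unfolding rep_def by (rule someI_ex)
  qed
  have "d > 0" using assms finite_X by (simp add: d_def card_gt_0_iff)
  moreover have "bij_betw (\<lambda>(h, i). act (rep i) h) (H \<times> {..<d}) X"
  proof (rule bij_betwI')
    fix p q assume p: "p \<in> H \<times> {..<d}" and q: "q \<in> H \<times> {..<d}"
    obtain h i h' j where pq: "p = (h, i)" "q = (h', j)" "h \<in> H" "h' \<in> H" "i < d" "j < d"
      using p q by auto
    show "((\<lambda>(h, i). act (rep i) h) p = (\<lambda>(h, i). act (rep i) h) q) = (p = q)"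
    proof
      assume eq: "(\<lambda>(h, i). act (rep i) h) p = (\<lambda>(h, i). act (rep i) h) q"
      have "orbit (rep i) = orbit (rep j)"
        using eq orbit_act rep pq by (metis case_prod_conv)
      then have "i = j" using f rep pq by (auto simp: bij_betw_def inj_on_def)
      then show "p = q" using eq pq act_free rep by auto
    qed simp
    show "(\<lambda>(h, i). act (rep i) h) p \<in> X" using pq rep act_closed by auto
  next
    fix x assume x: "x \<in> X"
    obtain i where i: "i < d" "f i = orbit x"
      using f x by (metis bij_betw_imp_surj_on image_iff lessThan_iff)
    then have "x \<in> orbit (rep i)" using rep mem_orbit_self[OF x] by simp
    then obtain h where "h \<in> H" "x = act (rep i) h" by (auto simp: orbit_def)
    then show "\<exists>p\<in>H \<times> {..<d}. x = (\<lambda>(h, i). act (rep i) h) p" using i by auto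
  qed
  ultimately show thesis using rep by (intro that[of d rep]) simp_all
qed

end

locale finite_monoid =
  fixes M :: "'m set" and mult :: "'m \<Rightarrow> 'm \<Rightarrow> 'm" and one :: 'm
  assumes finite_M: "finite M" and one_in_M: "one \<in> M"
    and mult_closed: "x \<in> M \<Longrightarrow> y \<in> M \<Longrightarrow> mult x y \<in> M"
    and mult_assoc: "x \<in> M \<Longrightarrow> y \<in> M \<Longrightarrow> z \<in> M \<Longrightarrow> mult (mult x y) z = mult x (mult y z)"
    and mult_one_left: "x \<in> M \<Longrightarrow> mult one x = x"
    and mult_one_right: "x \<in> M \<Longrightarrow> mult x one = x"
begin

primrec mpow :: "'m \<Rightarrow> nat \<Rightarrow> 'm" where
  "mpow s 0 = one"
| "mpow s (Suc n) = mult (mpow s n) s"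

lemma mpow_in_M: "s \<in> M \<Longrightarrow> mpow s n \<in> M"
  by (induction n) (simp_all add: one_in_M mult_closed)

lemma mpow_add: "s \<in> M \<Longrightarrow> mpow s (m + n) = mult (mpow s m) (mpow s n)"
  by (induction n) (simp_all add: mult_one_right mpow_in_M mult_assoc)

lemma mpow_Suc_left: "s \<in> M \<Longrightarrow> mpow s (Suc n) = mult s (mpow s n)"
  using mpow_add[of s 1 n] by (simp add: mult_one_left)

lemma idempotent_power:
  assumes s: "s \<in> M"
  obtains k where "k \<ge> 1" "mult (mpow s k) (mpow s k) = mpow s k"
proof -
  have "finite (range (mpow s))"
    using finite_subset[OF _ finite_M] mpow_in_M[OF s] by blast
  then have "\<not> inj (mpow s)" using finite_imageD by blast
  then obtain i j where ij: "i < j" "mpow s i = mpow s j"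
    by (metis injI linorder_neqE_nat)
  define t where "t = j - i"
  have period: "mpow s (n + t) = mpow s n" if "n \<ge> i" for n
  proof -
    have "mpow s (n + t) = mult (mpow s (n - i)) (mpow s j)"
      using mpow_add[OF s, of "n - i" j] that ij(1) by (simp add: t_def)
    also have "\<dots> = mpow s n"
      using mpow_add[OF s, of "n - i" i] that ij(2) by simp
    finally show ?thesis .
  qed
  have periodic: "mpow s (n + c * t) = mpow s n" if "n \<ge> i" for n c
  proof (induction c)
    case (Suc c)
    have "mpow s (n + Suc c * t) = mpow s ((n + c * t) + t)" by (simp add: algebra_simps)
    then show ?case using period[of "n + c * t"] that Suc by simp
  qed simp
  define k where "k = (i + 1) * t"
  have "t \<ge> 1" using ij(1) by (simp add: t_def)
  then have "k \<ge> i + 1" using mult_le_mono2[of 1 t "i + 1"] by (simp add: k_def)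
  then have "mpow s (k + k) = mpow s k" using periodic[of k "i + 1"] by (simp add: k_def)
  then show thesis using that[of k] \<open>k \<ge> i + 1\<close> mpow_add[OF s, of k k] by simp
qed

lemma idempotent_power_fixes:
  assumes a: "a \<in> M" and r: "r \<in> M" and q: "q \<in> M" and a_eq: "mult (mult r a) q = a"
  obtains k where "k \<ge> 1" "mult (mpow r k) a = a"
proof -
  have a_pow: "mult (mult (mpow r n) a) (mpow q n) = a" for n
  proof (induction n)
    case 0 then show ?case using a by (simp add: mult_one_left mult_one_right)
  next
    case (Suc n)
    have "mult (mult (mpow r (Suc n)) a) (mpow q (Suc n))
        = mult (mult r (mult (mult (mpow r n) a) (mpow q n))) q"
      unfolding mpow_Suc_left[OF r]
      using a r q mpow_in_M by (simp add: mult_assoc mult_closed)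
    then show ?case using a_eq Suc by simp
  qed
  obtain k where k: "k \<ge> 1" "mult (mpow r k) (mpow r k) = mpow r k"
    using idempotent_power[OF r] .
  have rk: "mpow r k \<in> M" and qk: "mpow q k \<in> M" using mpow_in_M r q by auto
  have "mult (mpow r k) a = mult (mpow r k) (mult (mult (mpow r k) a) (mpow q k))"
    using a_pow[of k] by simp
  also have "\<dots> = mult (mult (mult (mpow r k) (mpow r k)) a) (mpow q k)"
    using rk qk a by (simp add: mult_assoc mult_closed)
  also have "\<dots> = a" using k(2) a_pow[of k] by simp
  finally show thesis using that k(1) by simp
qed

abbreviation J :: "'m \<Rightarrow> 'm set" where
  "J \<equiv> Jideal M mult"

lemma Jideal_subset_M: "a \<in> M \<Longrightarrow> J a \<subseteq> M"
  unfolding Jideal_def using mult_closed by blast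

lemma mem_Jideal: "a \<in> M \<Longrightarrow> x \<in> M \<Longrightarrow> y \<in> M \<Longrightarrow> mult (mult x a) y \<in> J a"
  unfolding Jideal_def by blast

lemma mem_Jideal_self: "a \<in> M \<Longrightarrow> a \<in> J a"
  using mem_Jideal[OF _ one_in_M one_in_M] by (simp add: mult_one_left mult_one_right)

lemma mult_left_mem_Jideal: "a \<in> M \<Longrightarrow> x \<in> M \<Longrightarrow> mult x a \<in> J a"
  using mem_Jideal[OF _ _ one_in_M] by (simp add: mult_one_right mult_closed)

lemma mult_right_mem_Jideal: "a \<in> M \<Longrightarrow> y \<in> M \<Longrightarrow> mult a y \<in> J a"
  using mem_Jideal[OF _ one_in_M] by (simp add: mult_one_left)

lemma Jideal_mono:
  assumes a: "a \<in> M" and b: "b \<in> J a"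
  shows "J b \<subseteq> J a"
proof
  fix z assume "z \<in> J b"
  then obtain p q where pq: "p \<in> M" "q \<in> M" "z = mult (mult p b) q"
    unfolding Jideal_def by blast
  obtain x y where xy: "x \<in> M" "y \<in> M" "b = mult (mult x a) y"
    using b unfolding Jideal_def by blast
  have "z = mult (mult (mult p x) a) (mult y q)"
    using pq xy a by (simp add: mult_assoc mult_closed)
  then show "z \<in> J a" using pq xy a by (simp add: mem_Jideal mult_closed)
qed

lemma Jideal_eqI:
  assumes "a \<in> M" "b \<in> M" "a \<in> J b" "b \<in> J a"
  shows "J a = J b"
  using assms Jideal_mono by blast

text \<open>Stability: writing \<open>a = (p x) a q\<close>, an idempotent power of \<open>p x\<close> absorbs the
  left factor of \<open>a\<close>.\<close>
lemma Jideal_eq_left_unit: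
  assumes a: "a \<in> M" and x: "x \<in> M" and eq: "J (mult x a) = J a"
  obtains u where "u \<in> M" "mult u (mult x a) = a"
proof -
  obtain p q where pq: "p \<in> M" "q \<in> M" "a = mult (mult p (mult x a)) q"
    using mem_Jideal_self[OF a] eq unfolding Jideal_def by blast
  have px: "mult p x \<in> M" using pq(1) x by (rule mult_closed)
  have "mult (mult (mult p x) a) q = a" using pq a x by (simp add: mult_assoc)
  then obtain k where k: "k \<ge> 1" "mult (mpow (mult p x) k) a = a"
    using idempotent_power_fixes[OF a px pq(2)] by blast
  then obtain k' where k': "k = Suc k'" using not0_implies_Suc by fastforce
  have "mult (mult (mpow (mult p x) k') p) (mult x a) = a"
    using k k' a x pq(1) mpow_in_M[OF px] by (simp add: mult_assoc mult_closed)
  moreover have "mult (mpow (mult p x) k') p \<in> M" using mpow_in_M[OF px] pq(1) by (rule mult_closed)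
  ultimately show thesis using that by blast
qed

end

locale idempotent_in_linear_monoid = finite_monoid M mult one for M :: "'m set" and mult one +
  fixes zero :: 'm and G :: "'m set" and e :: 'm
  assumes zero_in_M: "zero \<in> M"
    and mult_zero_left: "x \<in> M \<Longrightarrow> mult zero x = zero"
    and mult_zero_right: "x \<in> M \<Longrightarrow> mult x zero = zero"
    and G_subset_M: "G \<subseteq> M"
    and G_left_inverse: "g \<in> G \<Longrightarrow> \<exists>g'\<in>G. mult g' g = one"
    and G_central: "g \<in> G \<Longrightarrow> x \<in> M \<Longrightarrow> mult g x = mult x g"
    and e_in_M: "e \<in> M" and e_idem: "mult e e = e" and e_nonzero: "e \<noteq> zero"
begin

abbreviation Je :: "'m set" where
  "Je \<equiv> Jclass M mult e"

lemma Jideal_diff_Iset: "J e - Iset M mult e = Je"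
  using Jideal_subset_M[OF e_in_M] mem_Jideal_self
  unfolding Jclass_def Iset_def by blast

lemma zero_notin_Je: "zero \<notin> Je"
proof
  assume "zero \<in> Je"
  then have "e \<in> J zero" using mem_Jideal_self[OF e_in_M] by (simp add: Jclass_def)
  then show False
    using e_nonzero zero_in_M mult_zero_left mult_zero_right unfolding Jideal_def by auto
qed

lemma Pmult_eq: "Pmult M mult zero e x y = (if mult x y \<in> Je then mult x y else zero)"
  by (simp add: Pmult_def Jideal_diff_Iset)

text \<open>\<open>J\<^sub>e \<inter> Me\<close>, the nonzero part of \<open>P(e)e\<close>; by stability it is the L-class of \<open>e\<close>.\<close>
definition Lclass :: "'m set" where
  "Lclass = {x \<in> Je. mult x e = x}"

lemma Lclass_M: "x \<in> Lclass \<Longrightarrow> x \<in> M"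
  by (simp add: Lclass_def Jclass_def)

lemma e_in_Lclass: "e \<in> Lclass"
  by (simp add: Lclass_def Jclass_def e_in_M e_idem)

lemma PeE_eq: "PeE M mult zero e = insert zero Lclass"
proof
  have Pset: "Pset M mult zero e = insert zero Je"
    by (simp add: Pset_def Jideal_diff_Iset)
  show "PeE M mult zero e \<subseteq> insert zero Lclass"
  proof
    fix y assume "y \<in> PeE M mult zero e"
    then obtain x where x: "x \<in> M" "y = Pmult M mult zero e x e"
      unfolding PeE_def Pset using zero_in_M by (auto simp: Jclass_def)
    then show "y \<in> insert zero Lclass"
      using e_in_M e_idem by (simp add: Pmult_eq Lclass_def mult_assoc)
  qed
  show "insert zero Lclass \<subseteq> PeE M mult zero e"
  proof
    fix x assume x: "x \<in> insert zero Lclass"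
    then have "x = Pmult M mult zero e x e"
      using zero_notin_Je e_in_M mult_zero_left by (auto simp: Pmult_eq Lclass_def)
    moreover have "x \<in> Pset M mult zero e" using x Pset by (auto simp: Lclass_def)
    ultimately show "x \<in> PeE M mult zero e" unfolding PeE_def by blast
  qed
qed

lemma Lclass_iff: "x \<in> Lclass \<longleftrightarrow> x \<in> M \<and> J x = J e \<and> mult x e = x"
  by (auto simp: Lclass_def Jclass_def)

lemma Lclass_left_unit:
  assumes x: "x \<in> Lclass"
  obtains u where "u \<in> M" "mult u x = e"
proof -
  have "x \<in> M" "J (mult x e) = J e" "mult x e = x" using x by (simp_all add: Lclass_iff)
  then show thesis using Jideal_eq_left_unit[OF e_in_M \<open>x \<in> M\<close>] that by auto
qed

lemma Lclass_intro:
  assumes y: "y \<in> J e" and u: "u \<in> M" "mult u y = e" and ye: "mult y e = y"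
  shows "y \<in> Lclass"
proof -
  have yM: "y \<in> M" using y Jideal_subset_M[OF e_in_M] by blast
  have "e \<in> J y" using mult_left_mem_Jideal[OF yM u(1)] u(2) by simp
  then show ?thesis using Jideal_eqI[OF yM e_in_M y] yM ye by (simp add: Lclass_iff)
qed

lemma e_mult_idem: "y \<in> M \<Longrightarrow> mult e (mult e y) = mult e y"
  using mult_assoc[OF e_in_M e_in_M, of y] e_idem by simp

lemma GJ_iff: "h \<in> GJ M mult e \<longleftrightarrow> h \<in> Lclass \<and> mult e h = h"
proof
  assume "h \<in> GJ M mult e"
  then obtain m where m: "m \<in> M" "h = mult (mult e m) e" "h \<in> Je"
    by (auto simp: GJ_def)
  then show "h \<in> Lclass \<and> mult e h = h"
    using e_in_M e_idem by (simp add: Lclass_def mult_assoc mult_closed e_mult_idem)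
next
  assume "h \<in> Lclass \<and> mult e h = h"
  then show "h \<in> GJ M mult e"
    unfolding GJ_def Lclass_def by (auto intro!: exI[of _ h] simp: Jclass_def)
qed

lemma GJ_M: "h \<in> GJ M mult e \<Longrightarrow> h \<in> M"
  by (simp add: GJ_iff Lclass_M)

lemma e_in_GJ: "e \<in> GJ M mult e"
  by (simp add: GJ_iff e_in_Lclass e_idem)

lemma Lclass_mult_GJ:
  assumes x: "x \<in> Lclass" and h: "h \<in> GJ M mult e"
  shows "mult x h \<in> Lclass"
proof -
  have xM: "x \<in> M" and hM: "h \<in> M" using x h by (simp_all add: Lclass_M GJ_M)
  obtain u where u: "u \<in> M" "mult u x = e" using Lclass_left_unit[OF x] .
  obtain v where v: "v \<in> M" "mult v h = e" using Lclass_left_unit h by (auto simp: GJ_iff)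
  show ?thesis
  proof (rule Lclass_intro[of _ "mult v u"])
    show "mult x h \<in> J e"
      using mult_right_mem_Jideal[OF xM hM] x by (simp add: Lclass_iff)
    show "mult v u \<in> M" using v u by (simp add: mult_closed)
    show "mult (mult v u) (mult x h) = e"
    proof -
      have "mult (mult v u) (mult x h) = mult v (mult (mult u x) h)"
        using u(1) v(1) xM hM by (simp add: mult_assoc mult_closed)
      then show ?thesis using u v h by (simp add: GJ_iff)
    qed
    show "mult (mult x h) e = mult x h"
      using xM hM h e_in_M by (simp add: mult_assoc GJ_iff Lclass_iff)
  qed
qed

lemma GJ_mult_closed:
  assumes "h \<in> GJ M mult e" "h' \<in> GJ M mult e"
  shows "mult h h' \<in> GJ M mult e"
proof -
  have "mult e (mult h h') = mult (mult e h) h'"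
    using assms GJ_M e_in_M by (simp add: mult_assoc)
  then show ?thesis using assms Lclass_mult_GJ by (simp add: GJ_iff)
qed

lemma GJ_cancel_left:
  assumes x: "x \<in> Lclass" and h: "h \<in> GJ M mult e" "h' \<in> GJ M mult e"
    and eq: "mult x h = mult x h'"
  shows "h = h'"
proof -
  obtain u where u: "u \<in> M" "mult u x = e" using Lclass_left_unit[OF x] .
  have "mult (mult u x) h = mult (mult u x) h'"
    using eq mult_assoc u(1) Lclass_M[OF x] GJ_M[OF h(1)] GJ_M[OF h(2)] by metis
  then show ?thesis using u h by (simp add: GJ_iff)
qed

sublocale GJ_action: free_right_action Lclass "GJ M mult e" mult mult e
proof
  show "finite Lclass" using finite_subset[OF _ finite_M] Lclass_M by blast
  show "mult x e = x" if "x \<in> Lclass" for x using that by (simp add: Lclass_def)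
  show "mult (mult x h) h' = mult x (mult h h')"
    if "x \<in> Lclass" "h \<in> GJ M mult e" "h' \<in> GJ M mult e" for x h h'
    using that by (simp add: mult_assoc Lclass_M GJ_M)
qed (simp_all add: e_in_GJ Lclass_mult_GJ GJ_mult_closed GJ_cancel_left)

lemma G_mult_Lclass:
  assumes g: "g \<in> G" and x: "x \<in> Lclass"
  shows "mult g x \<in> Lclass"
proof -
  have gM: "g \<in> M" and xM: "x \<in> M" using g x G_subset_M by (auto simp: Lclass_M)
  obtain g' where g': "g' \<in> G" "mult g' g = one" using G_left_inverse[OF g] by blast
  obtain u where u: "u \<in> M" "mult u x = e" using Lclass_left_unit[OF x] .
  show ?thesis
  proof (rule Lclass_intro[of _ "mult u g'"])
    show "mult g x \<in> J e"
      using mult_left_mem_Jideal[OF xM gM] x by (simp add: Lclass_iff)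
    show "mult u g' \<in> M" using u g' G_subset_M by (auto simp: mult_closed)
    show "mult (mult u g') (mult g x) = e"
    proof -
      have g'M: "g' \<in> M" using g' G_subset_M by blast
      have "mult (mult u g') (mult g x) = mult u (mult (mult g' g) x)"
        using u g'M gM xM by (simp add: mult_assoc mult_closed)
      then show ?thesis using u g' xM by (simp add: mult_one_left)
    qed
    show "mult (mult g x) e = mult g x"
      using gM xM e_in_M x by (simp add: mult_assoc Lclass_iff)
  qed
qed

lemma G_mult_GJ:
  assumes g: "g \<in> G" and h: "h \<in> GJ M mult e"
  shows "mult g h \<in> GJ M mult e"
proof -
  have gM: "g \<in> M" and hM: "h \<in> M" using g h G_subset_M GJ_M by auto
  have "mult e (mult g h) = mult (mult g e) h"
    using G_central[OF g e_in_M] gM hM e_in_M by (simp add: mult_assoc)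
  also have "\<dots> = mult g (mult e h)" using gM hM e_in_M by (simp add: mult_assoc)
  finally have "mult e (mult g h) = mult g (mult e h)" .
  then show ?thesis using G_mult_Lclass g h by (simp add: GJ_iff)
qed

definition basis_map :: "(nat \<Rightarrow> 'm) \<Rightarrow> ('m \<times> nat) option \<Rightarrow> 'm" where
  "basis_map rep w = (case w of None \<Rightarrow> zero | Some (h, i) \<Rightarrow> mult (rep i) h)"

lemma bij_betw_basis_map:
  assumes "bij_betw (\<lambda>(h, i). mult (rep i) h) (GJ M mult e \<times> {..<d}) Lclass"
  shows "bij_betw (basis_map rep) (Dsum M mult e d) (PeE M mult zero e)"
proof -
  let ?B = "GJ M mult e \<times> {..<d}"
  have "basis_map rep \<circ> Some = (\<lambda>(h, i). mult (rep i) h)"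
    by (auto simp: basis_map_def)
  then have "bij_betw (basis_map rep \<circ> Some) ?B Lclass" using assms by simp
  moreover have "bij_betw Some ?B (Some ` ?B)" by (simp add: bij_betw_imageI)
  ultimately have "bij_betw (basis_map rep) (Some ` ?B) Lclass"
    using bij_betw_comp_iff by blast
  moreover have "basis_map rep None \<notin> Lclass"
    using zero_notin_Je by (simp add: basis_map_def Lclass_def)
  ultimately have "bij_betw (basis_map rep) (Some ` ?B \<union> {None}) (Lclass \<union> {basis_map rep None})"
    by (intro notIn_Un_bij_betw) auto
  moreover have "Some ` ?B \<union> {None} = Dsum M mult e d" by (auto simp: Dsum_def)
  moreover have "Lclass \<union> {basis_map rep None} = PeE M mult zero e"
    by (simp add: PeE_eq basis_map_def)
  ultimately show ?thesis by simp
qed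

lemma Dsum_act_closed:
  "g \<in> G \<Longrightarrow> w \<in> Dsum M mult e d \<Longrightarrow> Dsum_act mult g w \<in> Dsum M mult e d"
  by (auto simp: Dsum_def Dsum_act_def G_mult_GJ)

lemma basis_map_Dsum_act:
  assumes rep: "\<And>i. i < d \<Longrightarrow> rep i \<in> Lclass" and g: "g \<in> G" and w: "w \<in> Dsum M mult e d"
  shows "basis_map rep (Dsum_act mult g w) = Pmult M mult zero e g (basis_map rep w)"
proof (cases w)
  case None
  then show ?thesis
    using g G_subset_M zero_notin_Je mult_zero_right
    by (auto simp: basis_map_def Dsum_act_def Pmult_eq)
next
  case (Some p)
  then obtain h i where w: "w = Some (h, i)" "h \<in> GJ M mult e" "i < d"
    using w by (auto simp: Dsum_def)
  have gM: "g \<in> M" and rM: "rep i \<in> M" and hM: "h \<in> M"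
    using g G_subset_M rep[OF w(3)] w(2) by (auto simp: Lclass_M GJ_M)
  have "mult (rep i) (mult g h) = mult g (mult (rep i) h)"
    using G_central[OF g rM] gM rM hM by (metis mult_assoc)
  moreover have "mult g (mult (rep i) h) \<in> Je"
    using G_mult_Lclass[OF g Lclass_mult_GJ[OF rep[OF w(3)] w(2)]] by (simp add: Lclass_def)
  ultimately show ?thesis using w(1) by (simp add: basis_map_def Dsum_act_def Pmult_eq)
qed

lemma Dsum_ract_closed:
  assumes h: "h \<in> hatGJ M mult zero e" and w: "w \<in> Dsum M mult e d"
  shows "Dsum_ract M mult zero e w h \<in> Dsum M mult e d"
proof (cases w)
  case (Some p)
  then obtain y i where w: "w = Some (y, i)" "y \<in> GJ M mult e" "i < d"
    using w by (auto simp: Dsum_def)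
  then have "Pmult M mult zero e y h = zero \<or> Pmult M mult zero e y h \<in> GJ M mult e"
    using h GJ_mult_closed GJ_M mult_zero_right by (auto simp: hatGJ_def Pmult_eq)
  then show ?thesis using w by (auto simp: Dsum_def Dsum_ract_def Let_def)
qed (simp add: Dsum_def Dsum_ract_def)

lemma basis_map_Dsum_ract:
  assumes rep: "\<And>i. i < d \<Longrightarrow> rep i \<in> Lclass"
    and h: "h \<in> hatGJ M mult zero e" and w: "w \<in> Dsum M mult e d"
  shows "basis_map rep (Dsum_ract M mult zero e w h) = Pmult M mult zero e (basis_map rep w) h"
proof (cases w)
  case None
  then show ?thesis
    using h zero_notin_Je mult_zero_left GJ_M zero_in_M
    by (auto simp: basis_map_def Dsum_ract_def Pmult_eq hatGJ_def)
next
  case (Some p)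
  then obtain y i where w: "w = Some (y, i)" "y \<in> GJ M mult e" "i < d"
    using w by (auto simp: Dsum_def)
  have rM: "rep i \<in> M" and yM: "y \<in> M" using rep[OF w(3)] w(2) by (auto simp: Lclass_M GJ_M)
  show ?thesis
  proof (cases "h = zero")
    case True
    then show ?thesis
      using w rM yM zero_notin_Je mult_zero_right mult_closed
      by (auto simp: basis_map_def Dsum_ract_def Pmult_eq)
  next
    case False
    then have hG: "h \<in> GJ M mult e" using h by (simp add: hatGJ_def)
    have yh: "mult y h \<in> Lclass" "mult y h \<noteq> zero"
      using Lclass_mult_GJ[OF _ hG] w(2) zero_notin_Je by (auto simp: GJ_iff Lclass_def)
    have "mult (rep i) (mult y h) = mult (mult (rep i) y) h"
      using rM yM GJ_M[OF hG] by (simp add: mult_assoc)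
    moreover have "mult (rep i) (mult y h) \<in> Je"
      using Lclass_mult_GJ[OF rep[OF w(3)] GJ_mult_closed[OF w(2) hG]] by (simp add: Lclass_def)
    ultimately show ?thesis
      using w(1) yh by (simp add: basis_map_def Dsum_ract_def Pmult_eq Let_def Lclass_def)
  qed
qed

end

lemma idempotent_in_linear_monoidI:
  assumes "hat_linear_monoid M mult one zero G" "e \<in> M" "mult e e = e" "e \<noteq> zero"
  shows "idempotent_in_linear_monoid M mult one zero G e"
  using assms unfolding hat_linear_monoid_def idempotent_in_linear_monoid_def
    idempotent_in_linear_monoid_axioms_def finite_monoid_def
  by blast

theorem mainTheorem8:
  fixes M G :: "'m set" and mult :: "'m \<Rightarrow> 'm \<Rightarrow> 'm" and one zero e :: 'm
  assumes "hat_linear_monoid M mult one zero G"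
    and "finite G"
    and "\<forall>g\<in>G. \<forall>h\<in>G. mult g h = mult h g"
    and "left_inductive M mult one zero G"
    and "e \<in> M" and "mult e e = e" and "e \<noteq> zero"
  shows "\<exists>d::nat. d > 0 \<and> (\<exists>\<phi>.
           bij_betw \<phi> (PeE M mult zero e) (Dsum M mult e d) \<and>
           vect_morphism G (PeE M mult zero e) zero (Pmult M mult zero e)
                           (Dsum M mult e d) None (Dsum_act mult) \<phi> \<and>
           vect_morphism G (Dsum M mult e d) None (Dsum_act mult)
                           (PeE M mult zero e) zero (Pmult M mult zero e)
                           (inv_into (PeE M mult zero e) \<phi>) \<and>
           (\<forall>x\<in>PeE M mult zero e. \<forall>h\<in>hatGJ M mult zero e.
              \<phi> (Pmult M mult zero e x h) = Dsum_ract M mult zero e (\<phi> x) h))"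
proof -
  interpret idempotent_in_linear_monoid M mult one zero G e
    using assms(1,5-7) by (rule idempotent_in_linear_monoidI)
  have "Lclass \<noteq> {}" using e_in_Lclass by blast
  obtain d :: nat and rep where d: "d > 0" and rep: "\<And>i. i < d \<Longrightarrow> rep i \<in> Lclass"
    and rep_bij: "bij_betw (\<lambda>(h, i). mult (rep i) h) (GJ M mult e \<times> {..<d}) Lclass"
    using GJ_action.free_basis[OF \<open>Lclass \<noteq> {}\<close>] by metis
  have \<Psi>: "bij_betw (basis_map rep) (Dsum M mult e d) (PeE M mult zero e)"
    using rep_bij by (rule bij_betw_basis_map)
  have None: "None \<in> Dsum M mult e d" "basis_map rep None = zero"
    by (simp_all add: Dsum_def basis_map_def)
  note vect_morphisms = vect_morphism_inv_into[where G = G and actV = "Pmult M mult zero e"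
      and actW = "Dsum_act mult", OF \<Psi> None Dsum_act_closed basis_map_Dsum_act[OF rep]]
  have ract: "inv_into (Dsum M mult e d) (basis_map rep) (Pmult M mult zero e x h)
      = Dsum_ract M mult zero e (inv_into (Dsum M mult e d) (basis_map rep) x) h"
    if "x \<in> PeE M mult zero e" "h \<in> hatGJ M mult zero e" for x h
    by (rule inv_into_commute[OF \<Psi>, where a = "\<lambda>w. Dsum_ract M mult zero e w h"])
      (use that Dsum_ract_closed basis_map_Dsum_ract[OF rep] in auto)
  show ?thesis
    by (intro exI[of _ d] exI[of _ "inv_into (Dsum M mult e d) (basis_map rep)"] conjI ballI)
      (simp_all add: d bij_betw_inv_into[OF \<Psi>] vect_morphisms ract)
qed

end
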